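(* For every $\varepsilon>0$ there exists $M>0$ such that every instance with $\sum_{j=1}^n h(j)\ge M$ (recall $h(1)=1$) satisfies $H^{PW''}\le \left(\tfrac{12}{7}+\varepsilon\right)H^*$. That is, when $\sum_j h(j)\gg h(1)$, the approximation ratio $H^{PW''}/H^*$ is asymptotically at most $\tfrac{12}{7}$.
   Context: An instance consists of an integer $n\ge 1$ and growth rates $1=h(1)\ge h(2)\ge\cdots\ge h(n)>0$ of bamboos $b_1,\dots,b_n$. Bamboo Garden Trimming (discrete version): - All heights are $0$ initially. - On each day $t=1,2,\dots$ every bamboo $b_j$ grows by $h(j)$. - At the end of each day the gardener cuts exactly one bamboo $\sigma(t)\in\{1,\dots,n\}$ back to height $0$. The height of a schedule $\sigma:\mathbb{N}\to\{1,\dots,n\}$ is the supremum, over all days $t$ and all $j$, of the height of $b_j$ at the end of day $t$ just before the cut. $H^*$ denotes the infimum of this height over all schedules. Value of algorithm PW'': - Split $\{1,\dots,n\}$ into four sets: - $S_1=\{j: \tfrac23<h(j)\le 1\}$; - $S_2=\{j:\tfrac12<h(j)\le\tfrac23\}$; - $S_3=\{j: h(j)\le\tfrac12 \text{ and } \tfrac23 2^{-k}<h(j)\le 2^{-k}\text{ for some integer }k\ge1\}$; - $S_4=\{j: h(j)\le\tfrac12\text{ and } 2^{-(k+1)}<h(j)\le \tfrac23 2^{-k}\text{ for some integer }k\ge 1\}$. - Modified growths: $h''(j)=2^{-k}$ for $j\in S_3$ and $h''(j)=\tfrac23 2^{-k}$ for $j\in S_4$, with $k$ as in the definition of the set. -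 Let $\pi_1=|S_1|$, $sh_3=\sum_{j\in S_3}h''(j)$, $sh_4=\sum_{j\in S_4}h''(j)$, $\pi_3=\lfloor sh_3\rfloor$, $\pi_4=\lfloor sh_4\rfloor$, $f_3=sh_3-\pi_3$, $f_4=sh_4-\pi_4$. - Option (a): $\pi_R(a)=\lceil f_3+f_4\rceil$ and $z(a)=\pi_1+|S_2|+\pi_3+\pi_4+\pi_R(a)$. - Option (b): if $S_2=\emptyset$ put $z(b)=+\infty$. Otherwise let $h^*=\max_{j\in S_2}h(j)$ and $f_2=\tfrac12$ if $|S_2|$ is odd, $f_2=0$ if $|S_2|$ is even. Then $\pi_R(b)=\lceil f_2+f_3+f_4\rceil$ and $z(b)=2h^*\,(\pi_1+\lfloor |S_2|/2\rfloor+\pi_3+\pi_4+\pi_R(b))$. - The value returned by algorithm PW'' is $H^{PW''}=\min\{z(a),z(b)\}$. The paper takes this as the maximum height of the periodic pinwheel trimming schedule that it builds from these partitions. *)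

theory Defs
  imports "HOL-Library.Extended_Real" Complex_Main
begin

definition bgt_instance :: "nat \<Rightarrow> (nat \<Rightarrow> real) \<Rightarrow> bool" where
  "bgt_instance n h \<longleftrightarrow> n \<ge> 1 \<and> h 1 = 1 \<and>
     (\<forall>i j. 1 \<le> i \<longrightarrow> i \<le> j \<longrightarrow> j \<le> n \<longrightarrow> h j \<le> h i) \<and> h n > 0"

(* A schedule cuts bamboo sigma t in {1..n} at the end of each day t >= 1 (sigma 0 is unused). *)
definition schedule :: "nat \<Rightarrow> (nat \<Rightarrow> nat) \<Rightarrow> bool" where
  "schedule n \<sigma> \<longleftrightarrow> (\<forall>t\<ge>1. \<sigma> t \<in> {1..n})"

(* height of bamboo j at the end of day t, after the cut of that day (day 0: initial height 0) *)
fun after_cut :: "(nat \<Rightarrow> nat) \<Rightarrow> (nat \<Rightarrow> real) \<Rightarrow> nat \<Rightarrow> nat \<Rightarrow> real" where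
  "after_cut \<sigma> h j 0 = 0"
| "after_cut \<sigma> h j (Suc t) = (if \<sigma> (Suc t) = j then 0 else after_cut \<sigma> h j t + h j)"

(* height of bamboo j at the end of day Suc t, just before the cut *)
definition before_cut :: "(nat \<Rightarrow> nat) \<Rightarrow> (nat \<Rightarrow> real) \<Rightarrow> nat \<Rightarrow> nat \<Rightarrow> real" where
  "before_cut \<sigma> h j t = after_cut \<sigma> h j t + h j"

definition sched_height :: "nat \<Rightarrow> (nat \<Rightarrow> real) \<Rightarrow> (nat \<Rightarrow> nat) \<Rightarrow> ereal" where
  "sched_height n h \<sigma> = (SUP p \<in> UNIV \<times> {1..n}. ereal (before_cut \<sigma> h (snd p) (fst p)))"

definition H_opt :: "nat \<Rightarrow> (nat \<Rightarrow> real) \<Rightarrow> ereal" where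
  "H_opt n h = (INF \<sigma> \<in> {\<sigma>. schedule n \<sigma>}. sched_height n h \<sigma>)"

(* for 0 < x <= 1/2: the unique k (necessarily >= 1) with 2^-(k+1) < x <= 2^-k *)
definition kidx :: "real \<Rightarrow> nat" where
  "kidx x = (THE k::nat. (1/2)^(k+1) < x \<and> x \<le> (1/2)^k)"

definition S1 :: "nat \<Rightarrow> (nat \<Rightarrow> real) \<Rightarrow> nat set" where
  "S1 n h = {j \<in> {1..n}. 2/3 < h j \<and> h j \<le> 1}"
definition S2 :: "nat \<Rightarrow> (nat \<Rightarrow> real) \<Rightarrow> nat set" where
  "S2 n h = {j \<in> {1..n}. 1/2 < h j \<and> h j \<le> 2/3}"
definition S3 :: "nat \<Rightarrow> (nat \<Rightarrow> real) \<Rightarrow> nat set" where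
  "S3 n h = {j \<in> {1..n}. h j \<le> 1/2 \<and>
     (\<exists>k::nat. k \<ge> 1 \<and> 2/3 * (1/2)^k < h j \<and> h j \<le> (1/2)^k)}"
definition S4 :: "nat \<Rightarrow> (nat \<Rightarrow> real) \<Rightarrow> nat set" where
  "S4 n h = {j \<in> {1..n}. h j \<le> 1/2 \<and>
     (\<exists>k::nat. k \<ge> 1 \<and> (1/2)^(k+1) < h j \<and> h j \<le> 2/3 * (1/2)^k)}"

definition h2 :: "(nat \<Rightarrow> real) \<Rightarrow> nat \<Rightarrow> real" where
  "h2 h j = (if 2/3 * (1/2)^(kidx (h j)) < h j then (1/2)^(kidx (h j))
             else 2/3 * (1/2)^(kidx (h j)))"

definition pw_za :: "nat \<Rightarrow> (nat \<Rightarrow> real) \<Rightarrow> real" where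
  "pw_za n h = (let sh3 = (\<Sum>j\<in>S3 n h. h2 h j); sh4 = (\<Sum>j\<in>S4 n h. h2 h j);
                    f3 = sh3 - of_int \<lfloor>sh3\<rfloor>; f4 = sh4 - of_int \<lfloor>sh4\<rfloor>
                in real (card (S1 n h)) + real (card (S2 n h)) + of_int \<lfloor>sh3\<rfloor> + of_int \<lfloor>sh4\<rfloor>
                   + of_int \<lceil>f3 + f4\<rceil>)"

definition pw_zb :: "nat \<Rightarrow> (nat \<Rightarrow> real) \<Rightarrow> ereal" where
  "pw_zb n h = (if S2 n h = {} then \<infinity> else
     (let sh3 = (\<Sum>j\<in>S3 n h. h2 h j); sh4 = (\<Sum>j\<in>S4 n h. h2 h j);
          f3 = sh3 - of_int \<lfloor>sh3\<rfloor>; f4 = sh4 - of_int \<lfloor>sh4\<rfloor>;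
          hs = Max (h ` S2 n h);
          f2 = (if odd (card (S2 n h)) then 1/2 else 0::real)
      in ereal (2 * hs * (real (card (S1 n h)) + real (card (S2 n h) div 2)
                 + of_int \<lfloor>sh3\<rfloor> + of_int \<lfloor>sh4\<rfloor> + of_int \<lceil>f2 + f3 + f4\<rceil>))))"

definition H_PW :: "nat \<Rightarrow> (nat \<Rightarrow> real) \<Rightarrow> ereal" where
  "H_PW n h = min (ereal (pw_za n h)) (pw_zb n h)"

end

theory Submission
  imports Defs
begin

text \<open>
  Every schedule has height at least \<open>\<Sum>j h(j)\<close>: over \<open>T\<close> days bamboo \<open>j\<close> grows by
  \<open>h(j) T\<close> but each cut removes at most the height bound, and only \<open>T\<close> cuts are available.
  Conversely both options of PW'' are, up to an additive constant, linear in the class sums: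
  \<open>z(a) \<le> |S\<^sub>1| + |S\<^sub>2| + sh\<^sub>3 + sh\<^sub>4 + 1\<close> and, since \<open>h\<^sup>* \<le> 2/3\<close>,
  \<open>z(b) \<le> 4/3 (|S\<^sub>1| + |S\<^sub>2|/2 + sh\<^sub>3 + sh\<^sub>4 + 1)\<close>. The convex combination
  \<open>4/7 z(a) + 3/7 z(b)\<close> charges each unit of growth rate at most \<open>12/7\<close>, because
  \<open>1 \<le> 3/2 h(j)\<close> on \<open>S\<^sub>1\<close>, \<open>1 \<le> 2 h(j)\<close> on \<open>S\<^sub>2\<close> and \<open>h''(j) \<le> 3/2 h(j)\<close> on
  \<open>S\<^sub>3 \<union> S\<^sub>4\<close>. Hence \<open>H\<^sup>P\<^sup>W\<^sup>'' \<le> 12/7 \<Sum>j h(j) + 8/7 \<le> (12/7 + \<epsilon>) H\<^sup>*\<close> once the sum is large.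
\<close>

lemma kidx_bounds:
  assumes "0 < x" "x \<le> 1"
  shows "(1/2::real)^(kidx x + 1) < x \<and> x \<le> (1/2)^kidx x"
proof -
  let ?P = "\<lambda>k::nat. (1/2::real)^(k+1) < x \<and> x \<le> (1/2)^k"
  obtain N where "(1/2::real)^N < x"
    using real_arch_pow_inv[of x "1/2"] assms by auto
  moreover have "(1/2::real)^(N+1) \<le> (1/2)^N" by (rule power_decreasing) auto
  ultimately have ex: "\<exists>k. (1/2::real)^(k+1) < x" by (metis order.strict_trans1)
  define k where "k = (LEAST k. (1/2::real)^(k+1) < x)"
  have "?P k"
  proof
    show "(1/2::real)^(k+1) < x" unfolding k_def using ex by (rule LeastI_ex)
    show "x \<le> (1/2)^k"
    proof (cases k)
      case (Suc m)
      then have "\<not> (1/2::real)^(m+1) < x"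
        using not_less_Least[of m "\<lambda>k. (1/2::real)^(k+1) < x"] k_def by auto
      then show ?thesis using Suc by simp
    qed (use assms in simp)
  qed
  moreover have "k' = k" if "?P k'" for k'
  proof (rule linorder_cases[of k' k])
    assume "k' < k"
    then have "(1/2::real)^k \<le> (1/2)^(k'+1)" by (intro power_decreasing) auto
    then show ?thesis using that \<open>?P k\<close> by linarith
  next
    assume "k < k'"
    then have "(1/2::real)^k' \<le> (1/2)^(k+1)" by (intro power_decreasing) auto
    then show ?thesis using that \<open>?P k\<close> by linarith
  qed
  ultimately have "\<exists>!k. ?P k" by blast
  then show ?thesis unfolding kidx_def by (rule theI')
qed

lemma h2_le:
  assumes "0 < h j" "h j \<le> 1"
  shows "h2 h j \<le> 3/2 * h j"
  using kidx_bounds[OF assms] unfolding h2_def by (auto simp: field_simps)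

subsection \<open>The lower bound \<open>H\<^sup>* \<ge> \<Sum>j h(j)\<close>\<close>

definition cut_count :: "(nat \<Rightarrow> nat) \<Rightarrow> nat \<Rightarrow> nat \<Rightarrow> real" where
  "cut_count \<sigma> j T = (\<Sum>t=1..T. if \<sigma> t = j then 1 else 0)"

lemma growth_le_cuts_times_height:
  assumes "\<And>t. before_cut \<sigma> h j t \<le> H"
  shows "h j * real T \<le> H * cut_count \<sigma> j T + after_cut \<sigma> h j T"
proof (induction T)
  case (Suc T)
  have "after_cut \<sigma> h j T + h j \<le> H" using assms[of T] by (simp add: before_cut_def)
  with Suc show ?case by (simp add: cut_count_def algebra_simps)
qed (simp add: cut_count_def)

lemma sum_cut_count_le: "(\<Sum>j=1..n. cut_count \<sigma> j T) \<le> real T"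
proof -
  have "(\<Sum>j=1..n. cut_count \<sigma> j T) = (\<Sum>t=1..T. \<Sum>j=1..n. if \<sigma> t = j then 1 else (0::real))"
    unfolding cut_count_def by (rule sum.swap)
  also have "\<dots> = (\<Sum>t=1..T. if \<sigma> t \<in> {1..n} then 1 else (0::real))"
    by (rule sum.cong) (auto simp: sum.delta eq_commute[of "\<sigma> _"])
  also have "\<dots> \<le> (\<Sum>t=1..T. (1::real))" by (rule sum_mono) auto
  finally show ?thesis by simp
qed

lemma growth_sum_le_height_bound:
  fixes H :: real
  assumes "1 \<le> n" and nonneg: "\<And>j. j \<in> {1..n} \<Longrightarrow> 0 \<le> h j"
    and bound: "\<And>t j. j \<in> {1..n} \<Longrightarrow> before_cut \<sigma> h j t \<le> H"
  shows "(\<Sum>j=1..n. h j) \<le> H"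
proof (rule ccontr)
  let ?S = "\<Sum>j=1..n. h j"
  assume "\<not> ?S \<le> H"
  have "0 \<le> H" using bound[of 1 0] nonneg[of 1] \<open>1 \<le> n\<close> by (simp add: before_cut_def)
  have growth_bound: "?S * real T \<le> H * (real T + real n)" for T
  proof -
    have each: "h j * real T \<le> H * (cut_count \<sigma> j T + 1)" if j: "j \<in> {1..n}" for j
    proof -
      have "after_cut \<sigma> h j T \<le> H"
        using bound[OF j, of T] nonneg[OF j] by (simp add: before_cut_def)
      then show ?thesis
        using growth_le_cuts_times_height[OF bound[OF j], of T] by (simp add: algebra_simps)
    qed
    have "?S * real T \<le> (\<Sum>j=1..n. H * (cut_count \<sigma> j T + 1))"
      unfolding sum_distrib_right by (rule sum_mono) (use each in auto)
    also have "\<dots> = H * ((\<Sum>j=1..n. cut_count \<sigma> j T) + real n)"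
      by (simp add: sum_distrib_left[symmetric] sum.distrib)
    also have "\<dots> \<le> H * (real T + real n)"
      using sum_cut_count_le \<open>0 \<le> H\<close> by (intro mult_left_mono) auto
    finally show ?thesis .
  qed
  obtain T :: nat where "H * real n / (?S - H) < real T" using reals_Archimedean2 by blast
  then have "H * real n < (?S - H) * real T" using \<open>\<not> ?S \<le> H\<close> by (simp add: field_simps)
  with growth_bound[of T] show False by (simp add: algebra_simps)
qed

lemma growth_sum_le_sched_height:
  assumes "1 \<le> n" "\<And>j. j \<in> {1..n} \<Longrightarrow> 0 \<le> h j"
  shows "ereal (\<Sum>j=1..n. h j) \<le> sched_height n h \<sigma>"
proof -
  have before_le: "ereal (before_cut \<sigma> h j t) \<le> sched_height n h \<sigma>" if "j \<in> {1..n}" for j t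
    unfolding sched_height_def by (rule SUP_upper2[of "(t, j)"]) (use that in auto)
  show ?thesis
  proof (cases "sched_height n h \<sigma>")
    case (real H)
    then show ?thesis
      using growth_sum_le_height_bound[OF assms, where \<sigma>=\<sigma> and H=H] before_le by auto
  next
    case MInf
    then show ?thesis using before_le[of 1 0] \<open>1 \<le> n\<close> by auto
  qed simp
qed

lemma bgt_instance_pos:
  assumes "bgt_instance n h" "j \<in> {1..n}"
  shows "0 < h j"
proof -
  have "h n \<le> h j" using assms unfolding bgt_instance_def by auto
  with assms(1) show ?thesis unfolding bgt_instance_def by auto
qed

lemma growth_sum_le_H_opt:
  assumes "bgt_instance n h"
  shows "ereal (\<Sum>j=1..n. h j) \<le> H_opt n h"
  using growth_sum_le_sched_height[of n h] bgt_instance_pos[OF assms] assms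
  unfolding H_opt_def bgt_instance_def by (auto intro: INF_greatest less_imp_le)

subsection \<open>The upper bound \<open>H\<^sup>P\<^sup>W\<^sup>'' \<le> 12/7 \<Sum>j h(j) + 8/7\<close>\<close>

lemma S3_S4_disjoint: "S3 n h \<inter> S4 n h = {}"
proof (rule ccontr)
  assume "S3 n h \<inter> S4 n h \<noteq> {}"
  then obtain j k l where S3: "2/3 * (1/2::real)^k < h j" "h j \<le> (1/2)^k"
     and S4: "(1/2::real)^(l+1) < h j" "h j \<le> 2/3 * (1/2)^l"
    unfolding S3_def S4_def by blast
  show False
  proof (rule linorder_cases[of k l])
    assume "k < l"
    then have "(1/2::real)^l \<le> (1/2)^k" by (intro power_decreasing) auto
    then show False using S3 S4 by linarith
  next
    assume "l < k"
    then have "(1/2::real)^k \<le> (1/2)^(l+1)" by (intro power_decreasing) auto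
    then show False using S3 S4 by linarith
  qed (use S3 S4 in simp)
qed

lemma sum_over_classes_le:
  assumes "\<And>j. j \<in> {1..n} \<Longrightarrow> 0 \<le> h j"
  shows "(\<Sum>j\<in>S1 n h. h j) + (\<Sum>j\<in>S2 n h. h j) + (\<Sum>j\<in>S3 n h. h j) + (\<Sum>j\<in>S4 n h. h j)
         \<le> (\<Sum>j=1..n. h j)"
proof -
  have sub: "S1 n h \<subseteq> {1..n}" "S2 n h \<subseteq> {1..n}" "S3 n h \<subseteq> {1..n}" "S4 n h \<subseteq> {1..n}"
    unfolding S1_def S2_def S3_def S4_def by auto
  then have fin: "finite (S1 n h)" "finite (S2 n h)" "finite (S3 n h)" "finite (S4 n h)"
    by (auto intro: finite_subset)
  have "1/2 < h j" if "j \<in> S1 n h \<union> S2 n h" for j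
    using that unfolding S1_def S2_def by auto
  moreover have "h j \<le> 1/2" if "j \<in> S3 n h \<union> S4 n h" for j
    using that unfolding S3_def S4_def by blast
  ultimately have "(S1 n h \<union> S2 n h) \<inter> S3 n h = {}"
    "(S1 n h \<union> S2 n h \<union> S3 n h) \<inter> S4 n h = {}"
    using S3_S4_disjoint[of n h] by fastforce+
  moreover have "S1 n h \<inter> S2 n h = {}" unfolding S1_def S2_def by auto
  ultimately have "(\<Sum>j\<in>S1 n h. h j) + (\<Sum>j\<in>S2 n h. h j) + (\<Sum>j\<in>S3 n h. h j) + (\<Sum>j\<in>S4 n h. h j)
      = (\<Sum>j\<in>S1 n h \<union> S2 n h \<union> S3 n h \<union> S4 n h. h j)"
    using fin by (simp add: sum.union_disjoint)
  also have "\<dots> \<le> (\<Sum>j=1..n. h j)"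
    by (rule sum_mono2) (use sub assms in auto)
  finally show ?thesis .
qed

lemma card_S1_le: "real (card (S1 n h)) \<le> 3/2 * (\<Sum>j\<in>S1 n h. h j)"
proof -
  have "real (card (S1 n h)) \<le> (\<Sum>j\<in>S1 n h. 3/2 * h j)"
    using sum_mono[of "S1 n h" "\<lambda>_. 1::real" "\<lambda>j. 3/2 * h j"] by (auto simp: S1_def)
  then show ?thesis by (simp add: sum_distrib_left)
qed

lemma card_S2_le: "real (card (S2 n h)) \<le> 2 * (\<Sum>j\<in>S2 n h. h j)"
proof -
  have "real (card (S2 n h)) \<le> (\<Sum>j\<in>S2 n h. 2 * h j)"
    using sum_mono[of "S2 n h" "\<lambda>_. 1::real" "\<lambda>j. 2 * h j"] by (auto simp: S2_def)
  then show ?thesis by (simp add: sum_distrib_left)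
qed

lemma sum_h2_le:
  assumes "\<And>j. j \<in> S \<Longrightarrow> 0 < h j \<and> h j \<le> 1"
  shows "(\<Sum>j\<in>S. h2 h j) \<le> 3/2 * (\<Sum>j\<in>S. h j)"
  unfolding sum_distrib_left by (rule sum_mono) (use assms h2_le in blast)

lemma S3_bounds:
  assumes "j \<in> S3 n h"
  shows "0 < h j \<and> h j \<le> 1"
proof -
  from assms obtain k where "2/3 * (1/2::real)^k < h j" "h j \<le> 1/2" unfolding S3_def by auto
  moreover have "0 < 2/3 * (1/2::real)^k" by simp
  ultimately show ?thesis by linarith
qed

lemma S4_bounds:
  assumes "j \<in> S4 n h"
  shows "0 < h j \<and> h j \<le> 1"
proof -
  from assms obtain k where "(1/2::real)^(k+1) < h j" "h j \<le> 1/2" unfolding S4_def by auto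
  moreover have "0 < (1/2::real)^(k+1)" by simp
  ultimately show ?thesis by linarith
qed

lemma H_PW_le_relaxed:
  fixes n :: nat and h :: "nat \<Rightarrow> real"
  defines "A \<equiv> real (card (S1 n h))" and "B \<equiv> real (card (S2 n h))"
    and "s \<equiv> (\<Sum>j\<in>S3 n h. h2 h j) + (\<Sum>j\<in>S4 n h. h2 h j)"
  shows "H_PW n h \<le> ereal (min (A + B + s + 1) (4/3 * (A + B/2 + s + 1)))"
proof -
  define sh3 where "sh3 = (\<Sum>j\<in>S3 n h. h2 h j)"
  define sh4 where "sh4 = (\<Sum>j\<in>S4 n h. h2 h j)"
  have s_nonneg: "0 \<le> s" unfolding s_def h2_def by (intro add_nonneg_nonneg sum_nonneg) auto
  have "of_int \<lceil>(sh3 - \<lfloor>sh3\<rfloor>) + (sh4 - \<lfloor>sh4\<rfloor>)\<rceil> \<le> (sh3 - \<lfloor>sh3\<rfloor>) + (sh4 - \<lfloor>sh4\<rfloor>) + (1::real)"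
    by (rule of_int_ceiling_le_add_one)
  then have za: "pw_za n h \<le> A + B + s + 1"
    unfolding pw_za_def Let_def A_def B_def s_def sh3_def sh4_def by linarith
  show ?thesis
  proof (cases "S2 n h = {}")
    case True
    then have "A + B + s + 1 \<le> 4/3 * (A + B/2 + s + 1)"
      using s_nonneg by (simp add: A_def B_def)
    then show ?thesis using za unfolding H_PW_def by (simp add: min_le_iff_disj)
  next
    case False
    define hs where "hs = Max (h ` S2 n h)"
    have fin: "finite (S2 n h)" by (rule finite_subset[of _ "{1..n}"]) (auto simp: S2_def)
    have hs_le: "hs \<le> 2/3" unfolding hs_def using fin False by (intro Max.boundedI) (auto simp: S2_def)
    have hs_pos: "0 < hs"
    proof -
      obtain j where j: "j \<in> S2 n h" using False by blast
      then have "h j \<le> hs" unfolding hs_def using fin by auto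
      with j show ?thesis by (auto simp: S2_def)
    qed
    define f2 where "f2 = (if odd (card (S2 n h)) then 1/2 else 0::real)"
    define X where "X = A + real (card (S2 n h) div 2) + \<lfloor>sh3\<rfloor> + \<lfloor>sh4\<rfloor>
         + \<lceil>f2 + (sh3 - \<lfloor>sh3\<rfloor>) + (sh4 - \<lfloor>sh4\<rfloor>)\<rceil>"
    have zb: "pw_zb n h = ereal (2 * hs * X)"
      using False unfolding pw_zb_def Let_def X_def hs_def f2_def A_def sh3_def sh4_def by simp
    have "real (card (S2 n h) div 2) + f2 = B / 2"
      unfolding f2_def B_def by (cases "odd (card (S2 n h))") (auto elim!: oddE evenE)
    moreover have "of_int \<lceil>f2 + (sh3 - \<lfloor>sh3\<rfloor>) + (sh4 - \<lfloor>sh4\<rfloor>)\<rceil>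
        \<le> f2 + (sh3 - \<lfloor>sh3\<rfloor>) + (sh4 - \<lfloor>sh4\<rfloor>) + (1::real)"
      by (rule of_int_ceiling_le_add_one)
    ultimately have "X \<le> A + B/2 + s + 1" unfolding X_def s_def sh3_def sh4_def by linarith
    then have "2 * hs * X \<le> 2 * hs * (A + B/2 + s + 1)"
      using hs_pos by (intro mult_left_mono) auto
    also have "\<dots> \<le> 4/3 * (A + B/2 + s + 1)"
      using hs_le s_nonneg by (intro mult_right_mono) (auto simp: A_def B_def)
    finally show ?thesis using za unfolding H_PW_def zb by (simp add: min_def)
  qed
qed

lemma min_le_convex_combination:
  fixes x y t :: real
  assumes "0 \<le> t" "t \<le> 1"
  shows "min x y \<le> t * x + (1 - t) * y"
proof -
  have "t * min x y + (1 - t) * min x y \<le> t * x + (1 - t) * y"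
    using assms by (intro add_mono mult_left_mono) auto
  then show ?thesis by (simp add: algebra_simps)
qed

lemma H_PW_le_affine_growth_sum:
  assumes "\<And>j. j \<in> {1..n} \<Longrightarrow> 0 \<le> h j"
  shows "H_PW n h \<le> ereal (12/7 * (\<Sum>j=1..n. h j) + 8/7)"
proof -
  define A where "A = real (card (S1 n h))"
  define B where "B = real (card (S2 n h))"
  define s where "s = (\<Sum>j\<in>S3 n h. h2 h j) + (\<Sum>j\<in>S4 n h. h2 h j)"
  define Za where "Za = A + B + s + 1"
  define Zb where "Zb = 4/3 * (A + B/2 + s + 1)"
  have "(\<Sum>j\<in>S3 n h. h2 h j) \<le> 3/2 * (\<Sum>j\<in>S3 n h. h j)"
    by (rule sum_h2_le) (rule S3_bounds)
  moreover have "(\<Sum>j\<in>S4 n h. h2 h j) \<le> 3/2 * (\<Sum>j\<in>S4 n h. h j)"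
    by (rule sum_h2_le) (rule S4_bounds)
  moreover have "(\<Sum>j\<in>S1 n h. h j) + (\<Sum>j\<in>S2 n h. h j) + (\<Sum>j\<in>S3 n h. h j)
      + (\<Sum>j\<in>S4 n h. h j) \<le> (\<Sum>j=1..n. h j)"
    by (rule sum_over_classes_le) (rule assms)
  ultimately have combination: "4/7 * Za + (1 - 4/7) * Zb \<le> 12/7 * (\<Sum>j=1..n. h j) + 8/7"
    using card_S1_le[of n h] card_S2_le[of n h]
    unfolding Za_def Zb_def A_def B_def s_def by (simp add: field_simps)
  have "H_PW n h \<le> ereal (min Za Zb)"
    using H_PW_le_relaxed[of n h] unfolding Za_def Zb_def A_def B_def s_def .
  also have "\<dots> \<le> ereal (4/7 * Za + (1 - 4/7) * Zb)"
    using min_le_convex_combination[of "4/7" Za Zb] by (simp del: ereal_min)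
  also have "\<dots> \<le> ereal (12/7 * (\<Sum>j=1..n. h j) + 8/7)"
    using combination by simp
  finally show ?thesis .
qed

theorem proposition1:
  shows "\<forall>\<epsilon>::real. \<epsilon> > 0 \<longrightarrow> (\<exists>M::real. M > 0 \<and>
           (\<forall>n h. bgt_instance n h \<and> (\<Sum>j=1..n. h j) \<ge> M \<longrightarrow>
              H_PW n h \<le> ereal (12/7 + \<epsilon>) * H_opt n h))"
proof (intro allI impI)
  fix \<epsilon> :: real assume "\<epsilon> > 0"
  show "\<exists>M>0. \<forall>n h. bgt_instance n h \<and> (\<Sum>j=1..n. h j) \<ge> M \<longrightarrow>
          H_PW n h \<le> ereal (12/7 + \<epsilon>) * H_opt n h"
  proof (intro exI[of _ "8 / (7 * \<epsilon>)"] conjI allI impI)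
    fix n h assume inst: "bgt_instance n h \<and> 8 / (7 * \<epsilon>) \<le> (\<Sum>j=1..n. h j)"
    let ?S = "\<Sum>j=1..n. h j"
    have "8/7 \<le> \<epsilon> * ?S" using inst \<open>\<epsilon> > 0\<close> by (simp add: field_simps)
    have "H_PW n h \<le> ereal (12/7 * ?S + 8/7)"
      using bgt_instance_pos inst by (intro H_PW_le_affine_growth_sum less_imp_le) auto
    also have "\<dots> \<le> ereal (12/7 + \<epsilon>) * ereal ?S"
      using \<open>8/7 \<le> \<epsilon> * ?S\<close> by (simp add: algebra_simps)
    also have "\<dots> \<le> ereal (12/7 + \<epsilon>) * H_opt n h"
      using growth_sum_le_H_opt[of n h] inst \<open>\<epsilon> > 0\<close> by (intro ereal_mult_left_mono) auto
    finally show "H_PW n h \<le> ereal (12/7 + \<epsilon>) * H_opt n h" .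
  qed (use \<open>\<epsilon> > 0\<close> in simp)
qed

end
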